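(* For every base $\mathcal{B}$ and ILL formula $\varphi$: if $\Vdash^{\varnothing}_{\mathcal{B}}\varphi$, then $\Vdash^{\varnothing}_{\mathcal{B}}!\varphi$.
   Context: Fix a set $\mathbb{A}$ of propositional atoms. ILL formulae: $\phi ::= p\in\mathbb{A} \mid \top \mid 0 \mid 1 \mid \phi\multimap\phi \mid \phi\otimes\phi \mid \phi\,\&\,\phi \mid \phi\oplus\phi \mid\ !\phi$. All multisets are finite; "$\Gamma,\Delta$" denotes multiset union. Atomic rules and bases: an atomic sequent is $P\Rightarrow p$ with $P$ a multiset of atoms, $p$ an atom. An atomic box is a multiset of atomic sequents. An atomic rule is a triple $\langle\mathbf{A},\mathbf{S},p\rangle$ with $\mathbf{A}$ a multiset of atomic boxes, $\mathbf{S}$ an atomic box, $p$ an atom. A base is a set of atomic rules. An atom $p$ is persistent in $\mathcal{B}$ if some $\langle\varnothing,\mathbf{S},p\rangle\in\mathcal{B}$ has $\mathbf{S}\neq\varnothing$. Derivability $\vdash_{\mathcal{B}}$: (Ref) $p\vdash_{\mathcal{B}}p$; (App) if $\langle\mathbf{A},\mathbf{S},p\rangle\in\mathcal{B}$ with $\mathbf{A}=\{\mathbf{T}_1,\dots,\mathbf{T}_m\}$, and there are atomic multisets $C_1,\dots,C_n$ ($n\ge m$) and a multiset $D=\{d_{m+1},\dots,d_n\}$ of atoms persistent in $\mathcal{B}$ such that $C_i,Q\vdash_{\mathcal{B}}q$ for every $i\le m$ and every $Q\Rightarrow q\in\mathbf{T}_i$, $C_j\vdash_{\mathcal{B}}d_j$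 for every $m<j\le n$, and $D,U\vdash_{\mathcal{B}}v$ for every $U\Rightarrow v\in\mathbf{S}$, then $C_1,\dots,C_n\vdash_{\mathcal{B}}p$. Support $\Vdash^L_{\mathcal{B}}$ (base $\mathcal{B}$, atomic multiset $L$), by induction on formulae: $\Vdash^L_{\mathcal{B}}p$ iff $L\vdash_{\mathcal{B}}p$; $\Vdash^L_{\mathcal{B}}\varphi\multimap\psi$ iff $\varphi\Vdash^L_{\mathcal{B}}\psi$; $\Vdash^L_{\mathcal{B}}\varphi\otimes\psi$ iff for all $\mathcal{C}\supseteq\mathcal{B}$, atomic $K$, atoms $p$: if $\varphi,\psi\Vdash^K_{\mathcal{C}}p$ then $\Vdash^{L,K}_{\mathcal{C}}p$; $\Vdash^L_{\mathcal{B}}1$ iff for all $\mathcal{C}\supseteq\mathcal{B}$, $K$, $p$: if $\Vdash^K_{\mathcal{C}}p$ then $\Vdash^{L,K}_{\mathcal{C}}p$; $\Vdash^L_{\mathcal{B}}\varphi\&\psi$ iff $\Vdash^L_{\mathcal{B}}\varphi$ and $\Vdash^L_{\mathcal{B}}\psi$; $\Vdash^L_{\mathcal{B}}\varphi\oplus\psi$ iff for all $\mathcal{C}\supseteq\mathcal{B}$, $K$, $p$: if $\varphi\Vdash^K_{\mathcal{C}}p$ and $\psi\Vdash^K_{\mathcal{C}}p$ then $\Vdash^{L,K}_{\mathcal{C}}p$; $\Vdash^L_{\mathcal{B}}0$ iff $\Vdash^{L,K}_{\mathcal{B}}p$ for all atoms $p$ and atomic $K$; $\Vdash^L_{\mathcal{B}}\top$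 always; $\Vdash^L_{\mathcal{B}}!\varphi$ iff for all $\mathcal{C}\supseteq\mathcal{B}$, $K$, $p$: if (for all $\mathcal{D}\supseteq\mathcal{C}$, $\Vdash^{\varnothing}_{\mathcal{D}}\varphi$ implies $\Vdash^K_{\mathcal{D}}p$) then $\Vdash^{L,K}_{\mathcal{C}}p$. For nonempty multisets: $\Vdash^L_{\mathcal{B}}\Gamma,\Delta$ iff $L=K,M$ with $\Vdash^K_{\mathcal{B}}\Gamma$ and $\Vdash^M_{\mathcal{B}}\Delta$. For a nonempty antecedent written $!\Delta,\Theta$, where $!\Delta$ collects the formulae with top-level connective $!$ (with $\Delta$ the formulae under those $!$) and $\Theta$ contains none: $!\Delta,\Theta\Vdash^L_{\mathcal{B}}\varphi$ iff for all $\mathcal{C}\supseteq\mathcal{B}$ and atomic $K$, if $\Vdash^{\varnothing}_{\mathcal{C}}\delta$ for every $\delta\in\Delta$ and $\Vdash^K_{\mathcal{C}}\Theta$ then $\Vdash^{L,K}_{\mathcal{C}}\varphi$ (when $\Theta$ is empty, $K$ is empty). An empty antecedent: $\varnothing\Vdash^L_{\mathcal{B}}\varphi$ means $\Vdash^L_{\mathcal{B}}\varphi$. *)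

theory Defs
  imports Main "HOL-Library.Multiset"
begin

datatype 'a ill =
    Atom 'a
  | Top
  | Zero
  | One
  | Lolli "'a ill" "'a ill"
  | Tensor "'a ill" "'a ill"
  | With "'a ill" "'a ill"
  | Plus "'a ill" "'a ill"
  | Bang "'a ill"

type_synonym 'a atseq = "'a multiset \<times> 'a"
type_synonym 'a atbox = "'a atseq multiset"
type_synonym 'a atrule = "'a atbox multiset \<times> 'a atbox \<times> 'a"
type_synonym 'a base = "'a atrule set"

definition persistent :: "'a base \<Rightarrow> 'a \<Rightarrow> bool" where
  "persistent B p \<longleftrightarrow> (\<exists>S. ({#}, S, p) \<in> B \<and> S \<noteq> {#})"

text \<open>Derivability. In (App) the boxes T_1..T_m of A are listed as Ts (mset Ts = A),
  the multisets C_1..C_n as Cs, and the persistent atoms d_{m+1}..d_n as ds.\<close>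

inductive derives :: "'a base \<Rightarrow> 'a multiset \<Rightarrow> 'a \<Rightarrow> bool" where
  Ref: "derives B {#p#} p"
| App: "\<lbrakk> (A, S, p) \<in> B;
          mset Ts = A;
          length Ts \<le> length Cs;
          length ds = length Cs - length Ts;
          \<forall>d\<in>set ds. persistent B d;
          \<forall>i<length Ts. \<forall>Qq\<in>set_mset (Ts ! i). derives B (Cs ! i + fst Qq) (snd Qq);
          \<forall>j. length Ts \<le> j \<and> j < length Cs \<longrightarrow> derives B (Cs ! j) (ds ! (j - length Ts));
          \<forall>Uv\<in>set_mset S. derives B (mset ds + fst Uv) (snd Uv) \<rbrakk>
        \<Longrightarrow> derives B (sum_list Cs) p"

text \<open>In antecedents, a formula !\<delta> contributes the requirement that \<delta> is supported
  with the empty multiset (and takes none of the context K); any other formula \<theta>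
  takes its share of K and must be supported by it.\<close>

fun support :: "'a base \<Rightarrow> 'a multiset \<Rightarrow> 'a ill \<Rightarrow> bool" where
  "support B L (Atom p) = derives B L p"
| "support B L (Lolli \<phi> \<psi>) =
     (\<forall>C K. B \<subseteq> C \<longrightarrow>
        (case \<phi> of Bang \<delta> \<Rightarrow> K = {#} \<and> support C {#} \<delta> | _ \<Rightarrow> support C K \<phi>)
        \<longrightarrow> support C (L + K) \<psi>)"
| "support B L (Tensor \<phi> \<psi>) =
     (\<forall>C K p. B \<subseteq> C \<longrightarrow>
        (\<forall>D K'. C \<subseteq> D \<longrightarrow>
           (\<exists>K1 K2. K' = K1 + K2
              \<and> (case \<phi> of Bang \<delta> \<Rightarrow> K1 = {#} \<and> support D {#} \<delta> | _ \<Rightarrow> support D K1 \<phi>)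
              \<and> (case \<psi> of Bang \<delta> \<Rightarrow> K2 = {#} \<and> support D {#} \<delta> | _ \<Rightarrow> support D K2 \<psi>))
           \<longrightarrow> derives D (K + K') p)
        \<longrightarrow> derives C (L + K) p)"
| "support B L One =
     (\<forall>C K p. B \<subseteq> C \<longrightarrow> derives C K p \<longrightarrow> derives C (L + K) p)"
| "support B L (With \<phi> \<psi>) = (support B L \<phi> \<and> support B L \<psi>)"
| "support B L (Plus \<phi> \<psi>) =
     (\<forall>C K p. B \<subseteq> C \<longrightarrow>
        (\<forall>D K'. C \<subseteq> D \<longrightarrow>
           (case \<phi> of Bang \<delta> \<Rightarrow> K' = {#} \<and> support D {#} \<delta> | _ \<Rightarrow> support D K' \<phi>)
           \<longrightarrow> derives D (K + K') p)
        \<longrightarrow> (\<forall>D K'. C \<subseteq> D \<longrightarrow>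
           (case \<psi> of Bang \<delta> \<Rightarrow> K' = {#} \<and> support D {#} \<delta> | _ \<Rightarrow> support D K' \<psi>)
           \<longrightarrow> derives D (K + K') p)
        \<longrightarrow> derives C (L + K) p)"
| "support B L Zero = (\<forall>K p. derives B (L + K) p)"
| "support B L Top = True"
| "support B L (Bang \<phi>) =
     (\<forall>C K p. B \<subseteq> C \<longrightarrow>
        (\<forall>D. C \<subseteq> D \<longrightarrow> support D {#} \<phi> \<longrightarrow> derives D K p)
        \<longrightarrow> derives C (L + K) p)"

end

theory Submission
  imports Defs
begin

text \<open>Support is monotone under extension of the base. Hence, if \<phi> is supported in \<B>,
  any hypothesis of the clause for !\<phi> at an extension \<C> of \<B> may be instantiated at
  \<C> itself, which yields the required derivation.\<close>

lemma persistent_mono: "persistent B p \<Longrightarrow> B \<subseteq> C \<Longrightarrow> persistent C p"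
  unfolding persistent_def by blast

lemma derives_mono: "derives B L p \<Longrightarrow> B \<subseteq> C \<Longrightarrow> derives C L p"
proof (induction rule: derives.induct)
  case (Ref B p)
  show ?case by (rule derives.Ref)
next
  case (App A S p B Ts Cs ds)
  then show ?case
    by (intro derives.App[where Ts = Ts and ds = ds]) (auto intro: persistent_mono)
qed

lemma support_mono: "support B L \<phi> \<Longrightarrow> B \<subseteq> C \<Longrightarrow> support C L \<phi>"
proof (induction \<phi> arbitrary: L)
  case (Atom p)
  then show ?case by (simp add: derives_mono)
next
  case Zero
  then show ?case by (auto intro: derives_mono)
next
  case (With \<phi> \<psi>)
  then show ?case by simp
  \<comment> \<open>every remaining clause other than \<top> quantifies over all extensions of the base\<close>
qed (simp_all only: support.simps, (meson order_trans)+)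

theorem corollary1:
  fixes B :: "'a base" and \<phi> :: "'a ill"
  assumes "support B {#} \<phi>"
  shows "support B {#} (Bang \<phi>)"
proof -
  have "derives C K p"
    if "B \<subseteq> C" and "\<forall>D. C \<subseteq> D \<longrightarrow> support D {#} \<phi> \<longrightarrow> derives D K p" for C K p
    using that support_mono[OF assms] by blast
  then show ?thesis by simp
qed

end
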